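(* Let $k\ge2$ and let $\mathcal{H}=(V,E)$ be a linear $k$-uniform hypergraph with $|V|=k^2$ and $|E|=k^2+1$, and let $e_0\in E$ be a hyperedge such that $\mathrm{deg}_{\mathcal{H}}(x)=k+1$ for all $x\in e_0$ and $\mathrm{deg}_{\mathcal{H}}(x)\ge k$ for all $x\in V\smallsetminus e_0$. Then (i) $\mathrm{deg}_{\mathcal{H}}(x)=k$ for all $x\in V\smallsetminus e_0$; (ii) $\mathrm{d}_{\mathcal{H}}(e)=k^2-k+1$ for all $e\in E\smallsetminus\{e_0\}$.
   Context: A hypergraph $\mathcal{H}=(V,E)$ has a finite vertex set $V$ and a finite set $E$ of nonempty subsets of $V$ (hyperedges). Linear: $|e\cap e'|\le1$ for distinct hyperedges; $k$-uniform: every hyperedge has $k$ elements. $\mathrm{deg}_{\mathcal{H}}(x)$ is the number of hyperedges containing $x$; $\mathrm{d}_{\mathcal{H}}(e)=|\{a\in E\smallsetminus\{e\}: a\cap e\ne\varnothing\}|$. *)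

theory Defs
  imports Main
begin

definition hypergraph :: "'a set \<Rightarrow> 'a set set \<Rightarrow> bool" where
  "hypergraph V E \<longleftrightarrow> finite V \<and> finite E \<and> (\<forall>e\<in>E. e \<noteq> {} \<and> e \<subseteq> V)"

definition linear_hg :: "'a set set \<Rightarrow> bool" where
  "linear_hg E \<longleftrightarrow> (\<forall>e\<in>E. \<forall>e'\<in>E. e \<noteq> e' \<longrightarrow> card (e \<inter> e') \<le> 1)"

definition uniform_hg :: "nat \<Rightarrow> 'a set set \<Rightarrow> bool" where
  "uniform_hg k E \<longleftrightarrow> (\<forall>e\<in>E. card e = k)"

definition vdeg :: "'a set set \<Rightarrow> 'a \<Rightarrow> nat" where
  "vdeg E x = card {e\<in>E. x \<in> e}"

definition edeg :: "'a set set \<Rightarrow> 'a set \<Rightarrow> nat" where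
  "edeg E e = card {a\<in>E - {e}. a \<inter> e \<noteq> {}}"

end

theory Submission
  imports Defs
begin

text \<open>
  Double counting incidences gives \<open>\<Sum>x\<in>V. deg x = k |E| = k (k\<^sup>2 + 1)\<close>. The vertices
  of \<open>e\<^sub>0\<close> contribute \<open>k (k + 1)\<close>, which leaves \<open>k (k\<^sup>2 - k)\<close> for the \<open>k\<^sup>2 - k\<close> remaining
  vertices; as each of them has degree at least \<open>k\<close>, all have degree exactly \<open>k\<close>.
  In a linear hypergraph \<open>d(e) = \<Sum>x\<in>e. (deg x - 1)\<close>. For \<open>e\<^sub>0\<close> this is \<open>k\<^sup>2 = |E| - 1\<close>,
  so every other edge \<open>e\<close> meets \<open>e\<^sub>0\<close>, in exactly one vertex \<open>y\<close>, and then
  \<open>d(e) = k + (k - 1)(k - 1) = k\<^sup>2 - k + 1\<close>.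
\<close>

lemma all_eq_if_sum_eq_lower_bound:
  fixes f :: "'b \<Rightarrow> nat"
  assumes "finite A" and "\<forall>x\<in>A. c \<le> f x" and "sum f A = c * card A"
  shows "\<forall>x\<in>A. f x = c"
proof (rule ccontr)
  assume "\<not> (\<forall>x\<in>A. f x = c)"
  then obtain a where "a \<in> A" "f a \<noteq> c" by blast
  with assms have "sum (\<lambda>_. c) A < sum f A"
    by (intro sum_strict_mono_ex1) (auto intro!: bexI[of _ a] simp: order_le_neq_trans)
  with assms show False by simp
qed

lemma sum_vdeg_eq_sum_card_Int:
  assumes "finite E" and "finite S"
  shows "(\<Sum>x\<in>S. vdeg E x) = (\<Sum>a\<in>E. card (a \<inter> S))"
proof -
  have "(\<Sum>x\<in>S. card {a\<in>E. x \<in> a}) = (\<Sum>a\<in>E. card {x\<in>S. x \<in> a})"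
    using sum_multicount_gen[OF assms(2,1), of "\<lambda>x a. x \<in> a"] by simp
  moreover have "{x\<in>S. x \<in> a} = a \<inter> S" for a by blast
  ultimately show ?thesis by (simp add: vdeg_def)
qed

lemma sum_vdeg_uniform:
  assumes "hypergraph V E" and "uniform_hg k E"
  shows "(\<Sum>x\<in>V. vdeg E x) = k * card E"
proof -
  have "(\<Sum>x\<in>V. vdeg E x) = (\<Sum>a\<in>E. card (a \<inter> V))"
    using assms(1) by (intro sum_vdeg_eq_sum_card_Int) (auto simp: hypergraph_def)
  also have "\<dots> = (\<Sum>a\<in>E. k)"
    using assms by (intro sum.cong) (auto simp: hypergraph_def uniform_hg_def Int_absorb2)
  finally show ?thesis by simp
qed

lemma vdeg_Diff_edge:
  assumes "finite E" and "e \<in> E" and "x \<in> e"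
  shows "vdeg (E - {e}) x = vdeg E x - 1"
proof -
  have "{a\<in>E - {e}. x \<in> a} = {a\<in>E. x \<in> a} - {e}" by blast
  then show ?thesis using assms by (simp add: vdeg_def)
qed

lemma linear_hg_common_vertex_unique:
  assumes "linear_hg E" and "e \<in> E" and "e' \<in> E" and "e \<noteq> e'" and "finite e"
    and "x \<in> e \<inter> e'" and "y \<in> e \<inter> e'"
  shows "x = y"
proof -
  have "card (e \<inter> e') \<le> Suc 0"
    using assms(1-4) by (simp add: linear_hg_def)
  then show ?thesis
    using assms(5-7) by (simp add: card_le_Suc0_iff_eq)
qed

text \<open>Linearity makes every term \<open>card (a \<inter> e)\<close> a 0/1 indicator of \<open>a\<close> meeting \<open>e\<close>.\<close>

lemma edeg_linear_eq_sum_card_Int: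
  assumes "linear_hg E" and "finite E" and "e \<in> E" and "finite e"
  shows "edeg E e = (\<Sum>a\<in>E - {e}. card (a \<inter> e))"
proof -
  let ?M = "{a\<in>E - {e}. a \<inter> e \<noteq> {}}"
  have "(\<Sum>a\<in>E - {e}. card (a \<inter> e)) = (\<Sum>a\<in>?M. card (a \<inter> e))"
    using assms(2) by (intro sum.mono_neutral_right) auto
  also have "\<dots> = (\<Sum>a\<in>?M. 1)"
  proof (rule sum.cong)
    fix a assume "a \<in> ?M"
    then have "card (a \<inter> e) \<le> 1" and "card (a \<inter> e) \<noteq> 0"
      using assms by (auto simp: linear_hg_def)
    then show "card (a \<inter> e) = 1" by simp
  qed simp
  finally show ?thesis by (simp add: edeg_def)
qed

lemma edeg_linear_eq_sum_vdeg:
  assumes "hypergraph V E" and "linear_hg E" and "e \<in> E"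
  shows "edeg E e = (\<Sum>x\<in>e. vdeg E x - 1)"
proof -
  have fin: "finite E" "finite e"
    using assms(1,3) finite_subset by (auto simp: hypergraph_def)
  have "edeg E e = (\<Sum>a\<in>E - {e}. card (a \<inter> e))"
    using assms(2) fin(1) assms(3) fin(2) by (rule edeg_linear_eq_sum_card_Int)
  also have "\<dots> = (\<Sum>x\<in>e. vdeg (E - {e}) x)"
    using fin by (simp add: sum_vdeg_eq_sum_card_Int)
  also have "\<dots> = (\<Sum>x\<in>e. vdeg E x - 1)"
    using fin assms(3) by (intro sum.cong) (auto simp: vdeg_Diff_edge)
  finally show ?thesis .
qed

lemma meets_if_edeg_eq_card:
  assumes "finite E" and "edeg E e = card (E - {e})" and "a \<in> E - {e}"
  shows "a \<inter> e \<noteq> {}"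
proof -
  have "{a\<in>E - {e}. a \<inter> e \<noteq> {}} = E - {e}"
    using assms(1,2) by (intro card_subset_eq) (auto simp: edeg_def)
  with assms(3) show ?thesis by blast
qed

lemma edeg_linear_degrees_k_but_one:
  assumes "hypergraph V E" and "linear_hg E" and "e \<in> E" and "card e = k"
    and "y \<in> e" and "vdeg E y = k + 1" and "\<forall>x\<in>e - {y}. vdeg E x = k"
  shows "edeg E e = k^2 - k + 1"
proof -
  have "finite e"
    using assms(1,3) finite_subset by (auto simp: hypergraph_def)
  then have "edeg E e = (vdeg E y - 1) + (\<Sum>x\<in>e - {y}. vdeg E x - 1)"
    using edeg_linear_eq_sum_vdeg[OF assms(1-3)] assms(5) sum.remove by fastforce
  also have "\<dots> = k + (k - 1) * (k - 1)"
    using assms(4-7) \<open>finite e\<close> by simp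
  also have "\<dots> = k^2 - k + 1"
    using assms(4,5) \<open>finite e\<close> by (cases k) (auto simp: power2_eq_square)
  finally show ?thesis .
qed

lemma vdeg_outside_edge_eq:
  assumes "hypergraph V E" and "uniform_hg k E"
    and "card V = k^2" and "card E = k^2 + 1"
    and "e0 \<in> E"
    and "\<forall>x\<in>e0. vdeg E x = k + 1"
    and "\<forall>x\<in>V - e0. vdeg E x \<ge> k"
  shows "\<forall>x\<in>V - e0. vdeg E x = k"
proof -
  have finV: "finite V" and e0V: "e0 \<subseteq> V" and card_e0: "card e0 = k"
    using assms(1,2,5) by (auto simp: hypergraph_def uniform_hg_def)
  have "(\<Sum>x\<in>e0. vdeg E x) + (\<Sum>x\<in>V - e0. vdeg E x) = k * (k^2 + 1)"
    using sum_vdeg_uniform[OF assms(1,2)] sum.subset_diff[OF e0V finV, of "vdeg E"] assms(4)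
    by simp
  moreover have "(\<Sum>x\<in>e0. vdeg E x) = k * (k + 1)"
    using assms(6) card_e0 by simp
  moreover have "k * (k^2 + 1) = k * (k + 1) + k * (k^2 - k)"
    by (simp add: power2_eq_square algebra_simps)
  moreover have "card (V - e0) = k^2 - k"
    using assms(3) e0V card_e0 finite_subset[OF e0V finV] by (simp add: card_Diff_subset)
  ultimately have "(\<Sum>x\<in>V - e0. vdeg E x) = k * card (V - e0)"
    by simp
  then show ?thesis
    using finV assms(7) by (intro all_eq_if_sum_eq_lower_bound) auto
qed

theorem proposition4p1:
  fixes V :: "'a set" and E :: "'a set set" and k :: nat and e0 :: "'a set"
  assumes "k \<ge> 2"
    and "hypergraph V E" and "linear_hg E" and "uniform_hg k E"
    and "card V = k^2" and "card E = k^2 + 1"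
    and "e0 \<in> E"
    and "\<forall>x\<in>e0. vdeg E x = k + 1"
    and "\<forall>x\<in>V - e0. vdeg E x \<ge> k"
  shows "(\<forall>x\<in>V - e0. vdeg E x = k) \<and> (\<forall>e\<in>E - {e0}. edeg E e = k^2 - k + 1)"
proof -
  have finE: "finite E"
    using assms(2) by (simp add: hypergraph_def)
  have card_edge: "card e = k" if "e \<in> E" for e
    using assms(4) that by (simp add: uniform_hg_def)
  have fin_edge: "finite e" if "e \<in> E" for e
    using assms(2) that finite_subset by (auto simp: hypergraph_def)
  have deg_outside: "\<forall>x\<in>V - e0. vdeg E x = k"
    using assms(2,4-9) by (rule vdeg_outside_edge_eq)
  have "edeg E e0 = (\<Sum>x\<in>e0. vdeg E x - 1)"
    using assms(2,3,7) by (rule edeg_linear_eq_sum_vdeg)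
  also have "\<dots> = card (E - {e0})"
    using assms(6-8) card_edge finE by (simp add: power2_eq_square)
  finally have meets_e0: "a \<inter> e0 \<noteq> {}" if "a \<in> E - {e0}" for a
    using meets_if_edeg_eq_card[OF finE _ that] by blast
  have "edeg E e = k^2 - k + 1" if e: "e \<in> E - {e0}" for e
  proof -
    obtain y where y: "y \<in> e \<inter> e0" using meets_e0[OF e] by blast
    have "x \<in> V - e0" if "x \<in> e - {y}" for x
      using linear_hg_common_vertex_unique[OF assms(3), of e e0 x y] that e y assms(2,7)
        fin_edge by (auto simp: hypergraph_def)
    then show ?thesis
      using edeg_linear_degrees_k_but_one[OF assms(2,3)] e y card_edge deg_outside assms(8)
      by auto
  qed
  with deg_outside show ?thesis by blast
qed

end
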